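(* Let $\rho_m>0$, $f(\rho)=\rho_m-\rho$, and $0<\bar\rho<\frac{\rho_m}{2}$. There exist $K,c>0$ such that for any $T>0$ and any initial data $\psi_0,\varphi_T$, the linear system \[ \begin{cases} \partial_t\psi=(f(\bar\rho)-2\bar\rho)\partial_x\psi+\bar\rho f^2(\bar\rho)\Delta\varphi, & t\in(0,T),\\ \partial_t\varphi=f(\bar\rho)\partial_x\varphi-\frac{1}{f(\bar\rho)}\psi, & t\in(0,T),\\ \psi(\cdot,0)=\psi_0,\quad \varphi(\cdot,T)=\varphi_T & \end{cases} \] on $\mathbb{R}^2$ admits a solution on $[0,T]$ that satisfies, for all $\xi\in\mathbb{R}^2$ and $t\in[0,T]$, \[ (|\hat\psi|+|\xi\hat\varphi|)(\xi,t)\leqslant K\big(e^{-c|\xi|t}|\hat\psi_0(\xi)|+e^{-c|\xi|(T-t)}|\xi\hat\varphi_T(\xi)|\big). \]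
   Context: $\hat g(\xi,t)$ denotes the Fourier transform in the space variables $(x,y)\in\mathbb{R}^2$, $\xi=(\xi_1,\xi_2)$. A solution is understood frequency by frequency: for each $\xi\neq0$, $t\mapsto(\hat\psi,\hat\varphi)(\xi,t)$ solves the Fourier-transformed ODE system with $\hat\psi(\xi,0)=\hat\psi_0(\xi)$ and $\hat\varphi(\xi,T)=\hat\varphi_T(\xi)$. *)

theory Defs
  imports "HOL-Analysis.Analysis"
begin

definition f :: "real \<Rightarrow> real \<Rightarrow> real" where
  "f \<rho>m \<rho> = \<rho>m - \<rho>"

end

theory Submission
  imports Defs
begin

(* Fix a frequency xi /= 0 and write k = xi_1, r = |xi|, b = f(rho_bar); the hypothesis
   rho_bar < rho_m / 2 says exactly rho_bar < b.  The transformed system is a linear 2x2 ODE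
   with constant coefficients and eigenvalues i (b - rho_bar) k -+ mu, where
   mu = sqrt (rho_bar b r^2 - rho_bar^2 k^2) >= sqrt (rho_bar (b - rho_bar)) r.
   The solution is a combination of the decaying and the growing mode; their amplitudes are
   determined by psi(0) and phi(T) through a 2x2 linear system whose determinant has modulus
   at least b mu e^(mu T).  So the decaying amplitude is controlled by psi_0 and the growing one
   by e^(-mu T) phi_T, which gives the two exponentials of the estimate with
   c = sqrt (rho_bar (b - rho_bar)). *)

definition solves_fourier_system ::
    "real \<Rightarrow> real \<Rightarrow> real \<Rightarrow> real \<Rightarrow> real set
       \<Rightarrow> (real \<Rightarrow> complex) \<Rightarrow> (real \<Rightarrow> complex) \<Rightarrow> bool"
  where "solves_fourier_system b \<rho> k r S \<psi> \<phi> \<longleftrightarrow>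
    (\<forall>t \<in> S.
       (\<psi> has_vector_derivative
          (complex_of_real (b - 2 * \<rho>) * \<i> * complex_of_real k * \<psi> t
           + complex_of_real (\<rho> * b\<^sup>2) * (- complex_of_real (r\<^sup>2)) * \<phi> t))
         (at t within S) \<and>
       (\<phi> has_vector_derivative
          (complex_of_real b * \<i> * complex_of_real k * \<phi> t
           - complex_of_real (1 / b) * \<psi> t))
         (at t within S))"

lemma solves_fourier_system_add:
  assumes "solves_fourier_system b \<rho> k r S \<psi>1 \<phi>1"
    and "solves_fourier_system b \<rho> k r S \<psi>2 \<phi>2"
  shows "solves_fourier_system b \<rho> k r S (\<lambda>s. \<psi>1 s + \<psi>2 s) (\<lambda>s. \<phi>1 s + \<phi>2 s)"
  using assms unfolding solves_fourier_system_def
  by (auto intro!: has_vector_derivative_add[THEN has_vector_derivative_eq_rhs] simp: algebra_simps)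

lemma solves_fourier_system_exp_mode:
  fixes \<kappa> P Q :: complex
  assumes P: "P * \<kappa> = complex_of_real (b - 2 * \<rho>) * \<i> * complex_of_real k * P
                 + complex_of_real (\<rho> * b\<^sup>2) * (- complex_of_real (r\<^sup>2)) * Q"
    and Q: "Q * \<kappa> = complex_of_real b * \<i> * complex_of_real k * Q - complex_of_real (1 / b) * P"
  shows "solves_fourier_system b \<rho> k r S (\<lambda>s. P * exp (s *\<^sub>R \<kappa>)) (\<lambda>s. Q * exp (s *\<^sub>R \<kappa>))"
  unfolding solves_fourier_system_def
proof (intro ballI conjI)
  fix t
  have mode: "((\<lambda>s. X * exp (s *\<^sub>R \<kappa>)) has_vector_derivative (X * \<kappa>) * exp (t *\<^sub>R \<kappa>))
      (at t within S)" for X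
    by (rule has_vector_derivative_eq_rhs,
        rule has_vector_derivative_mult_right, rule exp_scaleR_has_vector_derivative_right)
      (simp add: ac_simps)
  show "((\<lambda>s. P * exp (s *\<^sub>R \<kappa>)) has_vector_derivative
      complex_of_real (b - 2 * \<rho>) * \<i> * complex_of_real k * (P * exp (t *\<^sub>R \<kappa>))
      + complex_of_real (\<rho> * b\<^sup>2) * (- complex_of_real (r\<^sup>2)) * (Q * exp (t *\<^sub>R \<kappa>)))
      (at t within S)"
    using mode[of P] unfolding P by (simp add: algebra_simps)
  show "((\<lambda>s. Q * exp (s *\<^sub>R \<kappa>)) has_vector_derivative
      complex_of_real b * \<i> * complex_of_real k * (Q * exp (t *\<^sub>R \<kappa>))
      - complex_of_real (1 / b) * (P * exp (t *\<^sub>R \<kappa>))) (at t within S)"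
    using mode[of Q] unfolding Q by (simp add: algebra_simps)
qed

(* char is the characteristic equation of the mode matrix, rewritten for z = i b k - kappa. *)
lemma solves_fourier_system_char_root:
  fixes z C :: complex
  assumes "b \<noteq> 0"
    and char: "z\<^sup>2 = 2 * \<i> * complex_of_real (\<rho> * k) * z + complex_of_real (\<rho> * b * r\<^sup>2)"
  defines "\<kappa> \<equiv> complex_of_real b * \<i> * complex_of_real k - z"
  shows "solves_fourier_system b \<rho> k r S
    (\<lambda>s. C * complex_of_real b * z * exp (s *\<^sub>R \<kappa>)) (\<lambda>s. C * exp (s *\<^sub>R \<kappa>))"
proof (rule solves_fourier_system_exp_mode)
  have "C * complex_of_real b * z * \<kappa>
      = C * complex_of_real b * (complex_of_real b * \<i> * complex_of_real k * z - z\<^sup>2)"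
    by (simp add: \<kappa>_def algebra_simps power2_eq_square)
  also have "\<dots> = complex_of_real (b - 2 * \<rho>) * \<i> * complex_of_real k * (C * complex_of_real b * z)
      + complex_of_real (\<rho> * b\<^sup>2) * (- complex_of_real (r\<^sup>2)) * C"
    unfolding char by (simp add: algebra_simps power2_eq_square)
  finally show "C * complex_of_real b * z * \<kappa>
      = complex_of_real (b - 2 * \<rho>) * \<i> * complex_of_real k * (C * complex_of_real b * z)
      + complex_of_real (\<rho> * b\<^sup>2) * (- complex_of_real (r\<^sup>2)) * C" .
  show "C * \<kappa>
      = complex_of_real b * \<i> * complex_of_real k * C - complex_of_real (1 / b) * (C * complex_of_real b * z)"
    using assms(1) by (simp add: \<kappa>_def algebra_simps)
qed

lemma cramer_2x2:
  fixes a b c d y z :: "'a::field"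
  assumes "a * d - b * c \<noteq> 0"
  shows "a * ((y * d - b * z) / (a * d - b * c)) + b * ((a * z - c * y) / (a * d - b * c)) = y"
    and "c * ((y * d - b * z) / (a * d - b * c)) + d * ((a * z - c * y) / (a * d - b * c)) = z"
proof -
  have "a * (y * d - b * z) + b * (a * z - c * y) = y * (a * d - b * c)"
    and "c * (y * d - b * z) + d * (a * z - c * y) = z * (a * d - b * c)"
    by (simp_all add: algebra_simps)
  then show "a * ((y * d - b * z) / (a * d - b * c)) + b * ((a * z - c * y) / (a * d - b * c)) = y"
    and "c * ((y * d - b * z) / (a * d - b * c)) + d * ((a * z - c * y) / (a * d - b * c)) = z"
    using assms by (simp_all flip: add_divide_distrib)
qed

lemma decaying_growing_modes_le:
  fixes \<mu> x y A B t T :: real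
  assumes "0 \<le> \<mu>" and "0 \<le> t" and "t \<le> T"
    and A: "\<mu> * A \<le> x + y * exp (- \<mu> * T)"
    and B: "\<mu> * B \<le> (y + x * exp (- \<mu> * T)) * exp (- \<mu> * T)"
    and "0 \<le> x" and "0 \<le> y"
  shows "\<mu> * (A * exp (- \<mu> * t) + B * exp (\<mu> * t))
           \<le> 2 * (x * exp (- \<mu> * t) + y * exp (- \<mu> * (T - t)))"
proof -
  have "\<mu> * A * exp (- \<mu> * t) \<le> x * exp (- \<mu> * t) + y * exp (- \<mu> * (T + t))"
    using mult_right_mono[OF A, of "exp (- \<mu> * t)"] by (simp add: algebra_simps flip: exp_add)
  also have "\<dots> \<le> x * exp (- \<mu> * t) + y * exp (- \<mu> * (T - t))"
    using assms by (intro add_left_mono mult_left_mono) (auto intro: mult_left_mono)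
  finally have dec: "\<mu> * A * exp (- \<mu> * t) \<le> x * exp (- \<mu> * t) + y * exp (- \<mu> * (T - t))" .
  have "\<mu> * B * exp (\<mu> * t) \<le> y * exp (- \<mu> * (T - t)) + x * exp (- \<mu> * (T + (T - t)))"
    using mult_right_mono[OF B, of "exp (\<mu> * t)"] by (simp add: algebra_simps flip: exp_add)
  also have "\<dots> \<le> y * exp (- \<mu> * (T - t)) + x * exp (- \<mu> * t)"
    using assms by (intro add_left_mono mult_left_mono) (auto intro: mult_left_mono)
  finally have gro: "\<mu> * B * exp (\<mu> * t) \<le> y * exp (- \<mu> * (T - t)) + x * exp (- \<mu> * t)" .
  show ?thesis using dec gro by (simp add: algebra_simps)
qed

definition decay_rate :: "real \<Rightarrow> real \<Rightarrow> real"
  where "decay_rate b \<rho> = sqrt (\<rho> * (b - \<rho>))"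

definition estimate_const :: "real \<Rightarrow> real \<Rightarrow> real"
  where "estimate_const b \<rho> = 2 * (1 + b * sqrt (\<rho> * b))\<^sup>2 / (b * decay_rate b \<rho>)"

lemma decay_rate_pos: "0 < \<rho> \<Longrightarrow> \<rho> < b \<Longrightarrow> 0 < decay_rate b \<rho>"
  by (simp add: decay_rate_def)

lemma estimate_const_pos: "0 < \<rho> \<Longrightarrow> \<rho> < b \<Longrightarrow> 0 < estimate_const b \<rho>"
proof -
  assume "0 < \<rho>" "\<rho> < b"
  moreover have "0 < 1 + b * sqrt (\<rho> * b)"
    using \<open>0 < \<rho>\<close> \<open>\<rho> < b\<close> by (simp add: add_pos_nonneg)
  ultimately show ?thesis
    using decay_rate_pos[of \<rho> b] by (simp add: estimate_const_def)
qed

locale fourier_mode =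
  fixes b \<rho> k r :: real
  assumes rho_pos: "0 < \<rho>" and rho_less: "\<rho> < b" and r_pos: "0 < r" and k_le: "\<bar>k\<bar> \<le> r"
begin

lemma b_pos: "0 < b"
  using rho_pos rho_less by simp

definition rate :: real
  where "rate = sqrt (\<rho> * b * r\<^sup>2 - (\<rho> * k)\<^sup>2)"

lemma radicand_ge: "\<rho> * (b - \<rho>) * r\<^sup>2 \<le> \<rho> * b * r\<^sup>2 - (\<rho> * k)\<^sup>2"
proof -
  have "k\<^sup>2 \<le> r\<^sup>2"
    using k_le r_pos abs_le_square_iff[of k r] by simp
  then have "\<rho>\<^sup>2 * k\<^sup>2 \<le> \<rho>\<^sup>2 * r\<^sup>2"
    by (simp add: mult_left_mono)
  then show ?thesis
    by (simp add: algebra_simps power2_eq_square)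
qed

lemma rate_ge: "decay_rate b \<rho> * r \<le> rate"
proof -
  have "decay_rate b \<rho> * r = sqrt (\<rho> * (b - \<rho>) * r\<^sup>2)"
    using r_pos by (simp add: decay_rate_def real_sqrt_mult)
  also have "\<dots> \<le> rate"
    unfolding rate_def using radicand_ge by (rule real_sqrt_le_mono)
  finally show ?thesis .
qed

lemma rate_pos: "0 < rate"
  using mult_pos_pos[OF decay_rate_pos[OF rho_pos rho_less] r_pos] rate_ge by linarith

lemma rate_squared: "rate\<^sup>2 = \<rho> * b * r\<^sup>2 - (\<rho> * k)\<^sup>2"
proof -
  have "0 \<le> \<rho> * (b - \<rho>) * r\<^sup>2"
    using rho_pos rho_less by simp
  then show ?thesis
    unfolding rate_def using radicand_ge by simp
qed

definition \<omega> :: complex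
  where "\<omega> = Complex rate (\<rho> * k)"

lemma norm_omega: "cmod \<omega> = sqrt (\<rho> * b) * r"
proof -
  have "rate\<^sup>2 + (\<rho> * k)\<^sup>2 = \<rho> * b * r\<^sup>2"
    using rate_squared by simp
  then show ?thesis
    using r_pos by (simp add: \<omega>_def cmod_def real_sqrt_mult)
qed

lemma omega_mult_cnj: "\<omega> * cnj \<omega> = complex_of_real (\<rho> * b * r\<^sup>2)"
  using complex_norm_square[of \<omega>] norm_omega rho_pos b_pos
  by (simp add: power_mult_distrib)

definition decaying :: complex
  where "decaying = complex_of_real b * \<i> * complex_of_real k - \<omega>"

definition growing :: complex
  where "growing = complex_of_real b * \<i> * complex_of_real k + cnj \<omega>"

lemma omega_char_root:
  "\<omega>\<^sup>2 = 2 * \<i> * complex_of_real (\<rho> * k) * \<omega> + complex_of_real (\<rho> * b * r\<^sup>2)"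
proof -
  have "\<omega> - 2 * \<i> * complex_of_real (\<rho> * k) = cnj \<omega>"
    by (simp add: complex_eq_iff \<omega>_def)
  moreover have "\<omega>\<^sup>2
      = 2 * \<i> * complex_of_real (\<rho> * k) * \<omega> + \<omega> * (\<omega> - 2 * \<i> * complex_of_real (\<rho> * k))"
    by (simp add: algebra_simps power2_eq_square)
  ultimately show ?thesis
    by (simp add: omega_mult_cnj)
qed

lemma cnj_omega_char_root:
  "(- cnj \<omega>)\<^sup>2 = 2 * \<i> * complex_of_real (\<rho> * k) * (- cnj \<omega>) + complex_of_real (\<rho> * b * r\<^sup>2)"
proof -
  have "cnj \<omega> + 2 * \<i> * complex_of_real (\<rho> * k) = \<omega>"
    by (simp add: complex_eq_iff \<omega>_def)
  moreover have "(- cnj \<omega>)\<^sup>2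
      = 2 * \<i> * complex_of_real (\<rho> * k) * (- cnj \<omega>)
        + (cnj \<omega> + 2 * \<i> * complex_of_real (\<rho> * k)) * cnj \<omega>"
    by (simp add: algebra_simps power2_eq_square)
  ultimately show ?thesis
    using omega_mult_cnj by simp
qed

lemma Re_decaying: "Re decaying = - rate"
  and Re_growing: "Re growing = rate"
  and Im_growing: "Im growing = Im decaying"
  by (simp_all add: decaying_def growing_def \<omega>_def)

lemma exp_decaying: "exp (t *\<^sub>R decaying) = exp (- rate * t) * cis (t * Im decaying)"
  by (subst exp_eq_polar) (simp add: Re_decaying)

lemma exp_growing: "exp (t *\<^sub>R growing) = exp (rate * t) * cis (t * Im decaying)"
  by (subst exp_eq_polar) (simp add: Re_growing Im_growing)

lemma norm_exp_decaying: "cmod (exp (t *\<^sub>R decaying)) = exp (- rate * t)"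
  and norm_exp_growing: "cmod (exp (t *\<^sub>R growing)) = exp (rate * t)"
  by (simp_all only: exp_decaying exp_growing norm_mult norm_of_real norm_cis) simp_all

definition boundary_det :: "real \<Rightarrow> complex"
  where "boundary_det T = complex_of_real b * \<omega> * exp (T *\<^sub>R growing)
                          + complex_of_real b * cnj \<omega> * exp (T *\<^sub>R decaying)"

lemma norm_boundary_det_ge: "b * rate * exp (rate * T) \<le> cmod (boundary_det T)"
proof -
  define z where "z = \<omega> * exp (rate * T) + cnj \<omega> * exp (- rate * T)"
  have "b * rate * exp (rate * T) \<le> b * (rate * exp (rate * T) + rate * exp (- rate * T))"
    using b_pos rate_pos by simp
  also have "\<dots> = b * Re z"
    by (simp add: z_def \<omega>_def)
  also have "\<dots> \<le> b * cmod z"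
    using b_pos by (intro mult_left_mono complex_Re_le_cmod) simp
  also have "\<dots> = cmod (boundary_det T)"
  proof -
    have "boundary_det T = complex_of_real b * cis (T * Im decaying) * z"
      by (simp add: boundary_det_def z_def exp_decaying exp_growing algebra_simps)
    then show ?thesis
      using b_pos by (simp add: norm_mult)
  qed
  finally show ?thesis .
qed

lemma boundary_det_nonzero: "boundary_det T \<noteq> 0"
proof -
  have "0 < b * rate * exp (rate * T)"
    using b_pos rate_pos by simp
  then show ?thesis
    using norm_boundary_det_ge[of T] by auto
qed

definition amp_decaying :: "real \<Rightarrow> complex \<Rightarrow> complex \<Rightarrow> complex"
  where "amp_decaying T p0 q
           = (p0 * exp (T *\<^sub>R growing) + complex_of_real b * cnj \<omega> * q) / boundary_det T"

definition amp_growing :: "real \<Rightarrow> complex \<Rightarrow> complex \<Rightarrow> complex"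
  where "amp_growing T p0 q
           = (complex_of_real b * \<omega> * q - exp (T *\<^sub>R decaying) * p0) / boundary_det T"

definition psi :: "real \<Rightarrow> complex \<Rightarrow> complex \<Rightarrow> real \<Rightarrow> complex"
  where "psi T p0 q = (\<lambda>s. amp_decaying T p0 q * complex_of_real b * \<omega> * exp (s *\<^sub>R decaying)
                          + amp_growing T p0 q * complex_of_real b * (- cnj \<omega>) * exp (s *\<^sub>R growing))"

definition phi :: "real \<Rightarrow> complex \<Rightarrow> complex \<Rightarrow> real \<Rightarrow> complex"
  where "phi T p0 q = (\<lambda>s. amp_decaying T p0 q * exp (s *\<^sub>R decaying)
                          + amp_growing T p0 q * exp (s *\<^sub>R growing))"

lemma solves_psi_phi: "solves_fourier_system b \<rho> k r S (psi T p0 q) (phi T p0 q)"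
proof -
  have "solves_fourier_system b \<rho> k r S
      (\<lambda>s. amp_decaying T p0 q * complex_of_real b * \<omega> * exp (s *\<^sub>R decaying))
      (\<lambda>s. amp_decaying T p0 q * exp (s *\<^sub>R decaying))"
    unfolding decaying_def using b_pos omega_char_root
    by (intro solves_fourier_system_char_root) auto
  moreover have "solves_fourier_system b \<rho> k r S
      (\<lambda>s. amp_growing T p0 q * complex_of_real b * (- cnj \<omega>) * exp (s *\<^sub>R growing))
      (\<lambda>s. amp_growing T p0 q * exp (s *\<^sub>R growing))"
  proof -
    have "growing = complex_of_real b * \<i> * complex_of_real k - (- cnj \<omega>)"
      by (simp add: growing_def)
    then show ?thesis
      using b_pos cnj_omega_char_root by (simp only:) (intro solves_fourier_system_char_root, auto)
  qed
  ultimately show ?thesis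
    unfolding psi_def phi_def by (rule solves_fourier_system_add)
qed

lemma psi_initial: "psi T p0 q 0 = p0"
  using cramer_2x2(1)[of "complex_of_real b * \<omega>" "exp (T *\<^sub>R growing)" "- (complex_of_real b * cnj \<omega>)"
      "exp (T *\<^sub>R decaying)" p0 q] boundary_det_nonzero[of T]
  by (simp add: psi_def amp_decaying_def amp_growing_def boundary_det_def algebra_simps)

lemma phi_terminal: "phi T p0 q T = q"
  using cramer_2x2(2)[of "complex_of_real b * \<omega>" "exp (T *\<^sub>R growing)" "- (complex_of_real b * cnj \<omega>)"
      "exp (T *\<^sub>R decaying)" p0 q] boundary_det_nonzero[of T]
  by (simp add: phi_def amp_decaying_def amp_growing_def boundary_det_def algebra_simps)

lemma rate_mult_norm_div_boundary_det_le:
  assumes "cmod N \<le> B"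
  shows "rate * cmod (N / boundary_det T) \<le> B / (b * exp (rate * T))"
proof -
  have "cmod N / cmod (boundary_det T) \<le> B / (b * rate * exp (rate * T))"
    using assms norm_boundary_det_ge[of T] b_pos rate_pos
    by (intro frac_le) (auto intro: order_trans[OF norm_ge_zero])
  then have "rate * cmod (N / boundary_det T) \<le> rate * (B / (b * rate * exp (rate * T)))"
    using rate_pos unfolding norm_divide by (rule mult_left_mono[OF _ less_imp_le])
  also have "\<dots> = B / (b * exp (rate * T))"
    using rate_pos by simp
  finally show ?thesis .
qed

lemma amp_decaying_bound:
  "rate * cmod (amp_decaying T p0 q) \<le> cmod p0 / b + sqrt (\<rho> * b) * r * cmod q * exp (- rate * T)"
proof -
  have "cmod (p0 * exp (T *\<^sub>R growing) + complex_of_real b * cnj \<omega> * q)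
      \<le> cmod (p0 * exp (T *\<^sub>R growing)) + cmod (complex_of_real b * cnj \<omega> * q)"
    by (rule norm_triangle_ineq)
  also have "\<dots> = cmod p0 * exp (rate * T) + b * (sqrt (\<rho> * b) * r) * cmod q"
    using b_pos by (simp add: norm_mult norm_omega norm_exp_growing del: norm_exp_eq_Re)
  finally have "rate * cmod (amp_decaying T p0 q)
      \<le> (cmod p0 * exp (rate * T) + b * (sqrt (\<rho> * b) * r) * cmod q) / (b * exp (rate * T))"
    unfolding amp_decaying_def by (rule rate_mult_norm_div_boundary_det_le)
  then show ?thesis
    using b_pos by (simp add: exp_minus field_simps)
qed

lemma amp_growing_bound:
  "rate * cmod (amp_growing T p0 q)
     \<le> (sqrt (\<rho> * b) * r * cmod q + cmod p0 / b * exp (- rate * T)) * exp (- rate * T)"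
proof -
  have "cmod (complex_of_real b * \<omega> * q - exp (T *\<^sub>R decaying) * p0)
      \<le> cmod (complex_of_real b * \<omega> * q) + cmod (exp (T *\<^sub>R decaying) * p0)"
    by (rule norm_triangle_ineq4)
  also have "\<dots> = b * (sqrt (\<rho> * b) * r) * cmod q + exp (- rate * T) * cmod p0"
    using b_pos by (simp add: norm_mult norm_omega norm_exp_decaying del: norm_exp_eq_Re)
  finally have "rate * cmod (amp_growing T p0 q)
      \<le> (b * (sqrt (\<rho> * b) * r) * cmod q + exp (- rate * T) * cmod p0) / (b * exp (rate * T))"
    unfolding amp_growing_def by (rule rate_mult_norm_div_boundary_det_le)
  then show ?thesis
    using b_pos by (simp add: exp_minus field_simps)
qed

lemma norm_psi_phi_le:
  "cmod (psi T p0 q s) + r * cmod (phi T p0 q s)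
     \<le> (1 + b * sqrt (\<rho> * b)) * r
        * (cmod (amp_decaying T p0 q) * exp (- rate * s) + cmod (amp_growing T p0 q) * exp (rate * s))"
proof -
  let ?A = "cmod (amp_decaying T p0 q) * exp (- rate * s) + cmod (amp_growing T p0 q) * exp (rate * s)"
  have "cmod (psi T p0 q s)
      \<le> cmod (amp_decaying T p0 q * complex_of_real b * \<omega> * exp (s *\<^sub>R decaying))
         + cmod (amp_growing T p0 q * complex_of_real b * (- cnj \<omega>) * exp (s *\<^sub>R growing))"
    unfolding psi_def by (rule norm_triangle_ineq)
  also have "\<dots> = b * sqrt (\<rho> * b) * r * ?A"
    using b_pos
    by (simp add: norm_mult norm_omega norm_exp_decaying norm_exp_growing algebra_simps del: norm_exp_eq_Re)
  finally have "cmod (psi T p0 q s) \<le> b * sqrt (\<rho> * b) * r * ?A" .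
  moreover have "cmod (phi T p0 q s) \<le> ?A"
  proof -
    have "cmod (phi T p0 q s)
        \<le> cmod (amp_decaying T p0 q * exp (s *\<^sub>R decaying))
           + cmod (amp_growing T p0 q * exp (s *\<^sub>R growing))"
      unfolding phi_def by (rule norm_triangle_ineq)
    then show ?thesis
      by (simp add: norm_mult norm_exp_decaying norm_exp_growing del: norm_exp_eq_Re)
  qed
  ultimately have "cmod (psi T p0 q s) + r * cmod (phi T p0 q s) \<le> b * sqrt (\<rho> * b) * r * ?A + r * ?A"
    using r_pos by (intro add_mono mult_left_mono) auto
  then show ?thesis
    by (simp add: algebra_simps)
qed

lemma amplitudes_bound:
  assumes "0 \<le> t" and "t \<le> T"
  shows "r * (cmod (amp_decaying T p0 q) * exp (- rate * t) + cmod (amp_growing T p0 q) * exp (rate * t))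
     \<le> 2 / decay_rate b \<rho> * (cmod p0 / b * exp (- decay_rate b \<rho> * r * t)
                             + sqrt (\<rho> * b) * r * cmod q * exp (- decay_rate b \<rho> * r * (T - t)))"
proof -
  define c where "c = decay_rate b \<rho>"
  define x where "x = cmod p0 / b"
  define y where "y = sqrt (\<rho> * b) * r * cmod q"
  define A where "A = cmod (amp_decaying T p0 q) * exp (- rate * t) + cmod (amp_growing T p0 q) * exp (rate * t)"
  have c: "0 < c" and x: "0 \<le> x" and y: "0 \<le> y" and A: "0 \<le> A"
    using decay_rate_pos[OF rho_pos rho_less] rho_pos b_pos r_pos
    by (simp_all add: c_def x_def y_def A_def)
  have "c * (r * A) \<le> rate * A"
    using rate_ge A by (simp add: c_def mult_right_mono mult.assoc[symmetric])
  also have "\<dots> \<le> 2 * (x * exp (- rate * t) + y * exp (- rate * (T - t)))"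
    using rate_pos assms amp_decaying_bound amp_growing_bound x y
    unfolding A_def x_def y_def by (intro decaying_growing_modes_le) auto
  also have "\<dots> \<le> 2 * (x * exp (- c * r * t) + y * exp (- c * r * (T - t)))"
  proof -
    have "c * r * t \<le> rate * t" and "c * r * (T - t) \<le> rate * (T - t)"
      using rate_ge assms by (simp_all add: c_def mult_right_mono)
    then show ?thesis
      using x y by (auto intro!: add_mono mult_left_mono)
  qed
  finally show ?thesis
    using c unfolding c_def[symmetric] x_def[symmetric] y_def[symmetric] A_def[symmetric]
    by (simp add: field_simps)
qed

lemma norm_psi_phi_bound:
  assumes "0 \<le> t" and "t \<le> T"
  shows "cmod (psi T p0 q t) + r * cmod (phi T p0 q t)
     \<le> estimate_const b \<rho> * (exp (- decay_rate b \<rho> * r * t) * cmod p0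
                             + exp (- decay_rate b \<rho> * r * (T - t)) * (r * cmod q))"
proof -
  define c where "c = decay_rate b \<rho>"
  define g where "g = sqrt (\<rho> * b)"
  define e1 where "e1 = exp (- c * r * t)"
  define e2 where "e2 = exp (- c * r * (T - t))"
  have c: "0 < c" and g: "0 \<le> g"
    using decay_rate_pos[OF rho_pos rho_less] rho_pos b_pos by (simp_all add: c_def g_def)
  have p0: "cmod p0 / b \<le> (1 + b * g) / b * cmod p0"
    and q: "g * r * cmod q \<le> (1 + b * g) / b * (r * cmod q)"
  proof -
    have "(1 + b * g) / b * cmod p0 = cmod p0 / b + g * cmod p0"
      and "(1 + b * g) / b * (r * cmod q) = r * cmod q / b + g * r * cmod q"
      using b_pos by (simp_all add: field_simps)
    then show "cmod p0 / b \<le> (1 + b * g) / b * cmod p0" and "g * r * cmod q \<le> (1 + b * g) / b * (r * cmod q)"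
      using b_pos g r_pos by simp_all
  qed
  have "cmod (psi T p0 q t) + r * cmod (phi T p0 q t)
      \<le> (1 + b * g) * (r * (cmod (amp_decaying T p0 q) * exp (- rate * t)
                             + cmod (amp_growing T p0 q) * exp (rate * t)))"
    using norm_psi_phi_le[of T p0 q t] by (simp add: g_def mult.assoc)
  also have "\<dots> \<le> (1 + b * g) * (2 / c * (cmod p0 / b * e1 + g * r * cmod q * e2))"
    using amplitudes_bound[OF assms, of p0 q] b_pos g
    by (intro mult_left_mono) (simp_all add: c_def g_def e1_def e2_def)
  also have "\<dots> \<le> (1 + b * g) * (2 / c * ((1 + b * g) / b * cmod p0 * e1 + (1 + b * g) / b * (r * cmod q) * e2))"
    using p0 q b_pos g c by (intro mult_left_mono add_mono mult_right_mono) (simp_all add: e1_def e2_def)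
  also have "\<dots> = estimate_const b \<rho> * (e1 * cmod p0 + e2 * (r * cmod q))"
    unfolding estimate_const_def c_def[symmetric] g_def[symmetric]
    using b_pos c by (simp add: field_simps power2_eq_square)
  finally show ?thesis
    unfolding c_def e1_def e2_def .
qed

end

lemma fourier_two_point_solution:
  fixes \<psi>0 \<phi>T :: "real^2 \<Rightarrow> complex"
  assumes "0 < \<rho>" and "\<rho> < b"
  shows "\<exists>\<psi> \<phi> :: real^2 \<Rightarrow> real \<Rightarrow> complex.
    (\<forall>\<xi>. \<xi> \<noteq> 0 \<longrightarrow> \<psi> \<xi> 0 = \<psi>0 \<xi> \<and> \<phi> \<xi> T = \<phi>T \<xi> \<and>
          solves_fourier_system b \<rho> (\<xi> $ 1) (norm \<xi>) {0..T} (\<psi> \<xi>) (\<phi> \<xi>)) \<and>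
    (\<forall>\<xi>. \<forall>t \<in> {0..T}.
       cmod (\<psi> \<xi> t) + norm \<xi> * cmod (\<phi> \<xi> t)
         \<le> estimate_const b \<rho> * (exp (- decay_rate b \<rho> * norm \<xi> * t) * cmod (\<psi>0 \<xi>)
                       + exp (- decay_rate b \<rho> * norm \<xi> * (T - t)) * (norm \<xi> * cmod (\<phi>T \<xi>))))"
proof -
  have mode: "fourier_mode b \<rho> (\<xi> $ 1) (norm \<xi>)" if "\<xi> \<noteq> 0" for \<xi> :: "real^2"
    using assms that component_le_norm_cart[of \<xi> 1] by unfold_locales auto
  define \<psi> where "\<psi> \<xi> = (if \<xi> = 0 then (\<lambda>_. 0) else fourier_mode.psi b \<rho> (\<xi> $ 1) (norm \<xi>) T (\<psi>0 \<xi>) (\<phi>T \<xi>))"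
    for \<xi> :: "real^2"
  define \<phi> where "\<phi> \<xi> = (if \<xi> = 0 then (\<lambda>_. 0) else fourier_mode.phi b \<rho> (\<xi> $ 1) (norm \<xi>) T (\<psi>0 \<xi>) (\<phi>T \<xi>))"
    for \<xi> :: "real^2"
  have "\<psi> \<xi> 0 = \<psi>0 \<xi> \<and> \<phi> \<xi> T = \<phi>T \<xi> \<and>
      solves_fourier_system b \<rho> (\<xi> $ 1) (norm \<xi>) {0..T} (\<psi> \<xi>) (\<phi> \<xi>)" if "\<xi> \<noteq> 0" for \<xi>
    using that fourier_mode.psi_initial[OF mode] fourier_mode.phi_terminal[OF mode]
      fourier_mode.solves_psi_phi[OF mode] by (simp add: \<psi>_def \<phi>_def)
  moreover have "cmod (\<psi> \<xi> t) + norm \<xi> * cmod (\<phi> \<xi> t)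
      \<le> estimate_const b \<rho> * (exp (- decay_rate b \<rho> * norm \<xi> * t) * cmod (\<psi>0 \<xi>)
                    + exp (- decay_rate b \<rho> * norm \<xi> * (T - t)) * (norm \<xi> * cmod (\<phi>T \<xi>)))"
    if "t \<in> {0..T}" for \<xi> t
    using that fourier_mode.norm_psi_phi_bound[OF mode] estimate_const_pos[OF assms]
    by (cases "\<xi> = 0") (simp_all add: \<psi>_def \<phi>_def)
  ultimately show ?thesis
    by blast
qed

theorem lemma5:
  fixes \<rho>m \<rho>b :: real
  assumes "\<rho>m > 0" and "0 < \<rho>b" and "\<rho>b < \<rho>m / 2"
  shows "\<exists>K c. K > 0 \<and> c > 0 \<and>
    (\<forall>T > 0. \<forall>\<psi>0 \<phi>T :: real^2 \<Rightarrow> complex.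
      \<exists>\<psi> \<phi> :: real^2 \<Rightarrow> real \<Rightarrow> complex.
        (\<forall>\<xi>. \<xi> \<noteq> 0 \<longrightarrow>
           \<psi> \<xi> 0 = \<psi>0 \<xi> \<and> \<phi> \<xi> T = \<phi>T \<xi> \<and>
           (\<forall>t \<in> {0..T}.
              ((\<lambda>s. \<psi> \<xi> s) has_vector_derivative
                 (complex_of_real (f \<rho>m \<rho>b - 2 * \<rho>b) * \<i> * complex_of_real (\<xi> $ 1) * \<psi> \<xi> t
                  + complex_of_real (\<rho>b * (f \<rho>m \<rho>b)\<^sup>2) * (- complex_of_real ((norm \<xi>)\<^sup>2)) * \<phi> \<xi> t))
                (at t within {0..T}) \<and>
              ((\<lambda>s. \<phi> \<xi> s) has_vector_derivative
                 (complex_of_real (f \<rho>m \<rho>b) * \<i> * complex_of_real (\<xi> $ 1) * \<phi> \<xi> t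
                  - complex_of_real (1 / f \<rho>m \<rho>b) * \<psi> \<xi> t))
                (at t within {0..T}))) \<and>
        (\<forall>\<xi>. \<forall>t \<in> {0..T}.
           cmod (\<psi> \<xi> t) + norm \<xi> * cmod (\<phi> \<xi> t)
             \<le> K * (exp (- c * norm \<xi> * t) * cmod (\<psi>0 \<xi>)
                    + exp (- c * norm \<xi> * (T - t)) * (norm \<xi> * cmod (\<phi>T \<xi>)))))"
proof -
  have \<rho>: "0 < \<rho>b" "\<rho>b < f \<rho>m \<rho>b"
    using assms by (simp_all add: f_def)
  show ?thesis
    using estimate_const_pos[OF \<rho>] decay_rate_pos[OF \<rho>] fourier_two_point_solution[OF \<rho>]
    unfolding solves_fourier_system_def by blast
qed

end
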